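(* Let $\langle A,f,g\rangle$ be a PS-algebra satisfying (ABT0) $x\leq f(x,x)$, (ABT2) $y\cdot f(x,z)\leq f(x\cdot f(x,y),z)$ and (ABT3) $f(x,g(x,-y)\cdot y)\leq y$ for all $x,y,z\in A$. Then $\langle A,f,g\rangle$ satisfies (ABTW): $a\neq0\Rightarrow g(a,a)\leq a$ for all $a\in A$, if and only if it satisfies: for all $a,b\in A$, if $a\cdot b\neq0$ then $g(a,b)\leq f(a,b)$.
   Context: A PS-algebra is $\langle A,f,g\rangle$ where $A$ is a Boolean algebra with at least two elements (operations $+,\cdot,-,0,1$) and $f,g\colon A^2\to A$ satisfy: $f(x,y)=0$ whenever $x=0$ or $y=0$; $f$ is additive in each argument ($f(x+x',y)=f(x,y)+f(x',y)$, $f(x,y+y')=f(x,y)+f(x,y')$); $g(x,y)=1$ whenever $x=0$ or $y=0$; $g$ is co-additive in each argument ($g(x+x',y)=g(x,y)\cdot g(x',y)$, $g(x,y+y')=g(x,y)\cdot g(x,y')$). *)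

theory Defs
  imports Main
begin

text \<open>PS-algebra on a Boolean algebra of type 'a: + is sup, \<cdot> is inf, - is uminus,
  0 is bot, 1 is top.  The Boolean algebra must have at least two elements.\<close>

definition PS_algebra :: "('a::boolean_algebra \<Rightarrow> 'a \<Rightarrow> 'a) \<Rightarrow> ('a \<Rightarrow> 'a \<Rightarrow> 'a) \<Rightarrow> bool" where
  "PS_algebra f g \<longleftrightarrow>
     (bot::'a) \<noteq> top \<and>
     (\<forall>x y. (x = bot \<or> y = bot) \<longrightarrow> f x y = bot) \<and>
     (\<forall>x x' y. f (sup x x') y = sup (f x y) (f x' y)) \<and>
     (\<forall>x y y'. f x (sup y y') = sup (f x y) (f x y')) \<and>
     (\<forall>x y. (x = bot \<or> y = bot) \<longrightarrow> g x y = top) \<and>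
     (\<forall>x x' y. g (sup x x') y = inf (g x y) (g x' y)) \<and>
     (\<forall>x y y'. g x (sup y y') = inf (g x y) (g x y'))"

end

theory Submission
  imports Defs
begin

(* Monotonicity of f and antitonicity of g make g a b \<le> g (a \<sqinter> b) (a \<sqinter> b) and
   a \<sqinter> b \<le> f a b, so ABTW together with ABT0 gives g a b \<le> f a b.
   Conversely, put c = g a a \<sqinter> -a. ABT3 gives f a c \<le> -a, so a \<sqinter> f a c = 0 and ABT2 yields
   c \<sqinter> f a a \<le> f 0 a = 0; as c \<le> g a a \<le> f a a, this forces c = 0, i.e. g a a \<le> a. *)

lemma PS_algebra_f_bot_left:
  assumes "PS_algebra f g"
  shows "f bot y = bot"
  using assms by (simp add: PS_algebra_def)

lemma PS_algebra_distrib: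
  assumes "PS_algebra f g"
  shows "f (sup x x') y = sup (f x y) (f x' y)"
    and "f x (sup y y') = sup (f x y) (f x y')"
    and "g (sup x x') y = inf (g x y) (g x' y)"
    and "g x (sup y y') = inf (g x y) (g x y')"
  using assms by (simp_all add: PS_algebra_def)

lemma PS_algebra_f_mono:
  assumes "PS_algebra f g" and "x \<le> x'" and "y \<le> y'"
  shows "f x y \<le> f x' y'"
proof -
  have "f x y \<le> f x (sup y y')"
    by (simp add: PS_algebra_distrib(2) [OF assms(1)])
  also have "\<dots> \<le> f (sup x x') y'"
    using assms(3) by (simp add: PS_algebra_distrib(1) [OF assms(1)] sup.absorb2)
  also have "\<dots> = f x' y'"
    using assms(2) by (simp add: sup.absorb2)
  finally show ?thesis .
qed

lemma PS_algebra_g_antimono: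
  assumes "PS_algebra f g" and "x \<le> x'" and "y \<le> y'"
  shows "g x' y' \<le> g x y"
proof -
  have "g x' y' = g (sup x x') y'"
    using assms(2) by (simp add: sup.absorb2)
  also have "\<dots> \<le> g x (sup y y')"
    using assms(3) by (simp add: PS_algebra_distrib(3) [OF assms(1)] sup.absorb2)
  also have "\<dots> \<le> g x y"
    by (simp add: PS_algebra_distrib(4) [OF assms(1)])
  finally show ?thesis .
qed

lemma g_le_f_if_ABTW:
  assumes "PS_algebra f g"
    and ABT0: "\<And>x. x \<le> f x x"
    and ABTW: "\<And>a. a \<noteq> bot \<Longrightarrow> g a a \<le> a"
    and "inf a b \<noteq> bot"
  shows "g a b \<le> f a b"
proof -
  have "g a b \<le> g (inf a b) (inf a b)"
    using assms(1) by (rule PS_algebra_g_antimono) simp_all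
  also have "\<dots> \<le> inf a b"
    using ABTW assms(4) .
  also have "\<dots> \<le> f (inf a b) (inf a b)"
    by (rule ABT0)
  also have "\<dots> \<le> f a b"
    using assms(1) by (rule PS_algebra_f_mono) simp_all
  finally show ?thesis .
qed

lemma ABTW_if_g_le_f:
  assumes "PS_algebra f g"
    and ABT2: "\<And>x y z. inf y (f x z) \<le> f (inf x (f x y)) z"
    and ABT3: "\<And>x y. f x (inf (g x (- y)) y) \<le> y"
    and g_le_f: "g a a \<le> f a a"
  shows "g a a \<le> a"
proof -
  define c where "c = inf (g a a) (- a)"
  have "f a c \<le> - a"
    using ABT3 [of a "- a"] by (simp add: c_def)
  then have "inf a (f a c) = bot"
    by (metis inf_commute inf_shunt)
  then have "inf c (f a a) \<le> bot"
    using ABT2 [of c a a] PS_algebra_f_bot_left [OF assms(1)] by simp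
  moreover have "c \<le> f a a"
    using g_le_f by (simp add: c_def le_infI1)
  ultimately have "c = bot"
    by (simp add: inf_absorb1 bot_unique)
  then show ?thesis
    by (simp add: c_def inf_shunt)
qed

theorem lemma34:
  fixes f g :: "'a::boolean_algebra \<Rightarrow> 'a \<Rightarrow> 'a"
  assumes "PS_algebra f g"
    and ABT0: "\<forall>x. x \<le> f x x"
    and ABT2: "\<forall>x y z. inf y (f x z) \<le> f (inf x (f x y)) z"
    and ABT3: "\<forall>x y. f x (inf (g x (- y)) y) \<le> y"
  shows "(\<forall>a. a \<noteq> bot \<longrightarrow> g a a \<le> a) \<longleftrightarrow>
         (\<forall>a b. inf a b \<noteq> bot \<longrightarrow> g a b \<le> f a b)"
proof
  assume ABTW: "\<forall>a. a \<noteq> bot \<longrightarrow> g a a \<le> a"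
  show "\<forall>a b. inf a b \<noteq> bot \<longrightarrow> g a b \<le> f a b"
  proof (intro allI impI)
    fix a b :: 'a
    assume "inf a b \<noteq> bot"
    with assms(1) ABT0 [rule_format] ABTW [rule_format] show "g a b \<le> f a b"
      by (rule g_le_f_if_ABTW)
  qed
next
  assume g_le_f: "\<forall>a b. inf a b \<noteq> bot \<longrightarrow> g a b \<le> f a b"
  show "\<forall>a. a \<noteq> bot \<longrightarrow> g a a \<le> a"
  proof (intro allI impI)
    fix a :: 'a
    assume "a \<noteq> bot"
    with g_le_f have "g a a \<le> f a a" by simp
    with assms(1) ABT2 [rule_format] ABT3 [rule_format] show "g a a \<le> a"
      by (rule ABTW_if_g_le_f)
  qed
qed

end
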